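(* Let $(M^{2n},J)$ be an almost complex manifold of real dimension $2n$ and $o\in M$. Let $(U,z)$, $z=(z^1,\dots,z^n)$, be a local complex coordinate around $o$ (i.e. the real and imaginary parts of $z^1,\dots,z^n$ form a smooth chart on $U$, not necessarily compatible with $J$) such that $\frac{\partial}{\partial z^i}\big|_o\in T^{1,0}_oM$ for $i=1,\dots,n$. Let $f$ be a holomorphic function on $U$ such that $\frac{\partial^{|\alpha|}f}{\partial z^\alpha}(o)=0$ for every multi-index $\alpha$ with $|\alpha|\le m$. Then $\mathrm{ord}_o(f)\ge m+1$.
   Context: $T^{1,0}_oM$ is the $\sqrt{-1}$-eigenspace of $J$ on $T_oM\otimes\mathbb C$. A complex function $f$ is holomorphic if $\bar\partial f=(df)^{0,1}=0$, i.e. $df$ vanishes on the $(-\sqrt{-1})$-eigenspace $T^{0,1}$ of $J$. $\mathrm{ord}_o(f)$ is the vanishing order of $f$ at $o$: the largest $k$ such that all partial derivatives of $f$ (in any smooth chart) of order $<k$ vanish at $o$. *)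

theory Defs
  imports "HOL-Analysis.Analysis" "HOL-Library.Extended_Nat"
begin

text \<open>Local model: the chart (U, z) identifies a neighbourhood of o with an open set
U of complex^'n, viewed as a real vector space of dimension 2n (real coordinates
x^k = Re z^k, y^k = Im z^k).  Tangent vectors are elements of complex^'n (as a real
vector space); the real coordinate vector fields d/dx^k, d/dy^k are axis k 1 and axis k i.\<close>

text \<open>Iterated directional derivatives (directions applied innermost = last).\<close>
fun Dl :: "('a::real_normed_vector) list \<Rightarrow> ('a \<Rightarrow> 'b::real_normed_vector) \<Rightarrow> 'a \<Rightarrow> 'b" where
  "Dl [] g = g"
| "Dl (v # vs) g = (\<lambda>p. frechet_derivative (Dl vs g) (at p) v)"

definition smooth_on :: "'a::real_normed_vector set \<Rightarrow> ('a \<Rightarrow> 'b::real_normed_vector) \<Rightarrow> bool" where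
  "smooth_on U g \<longleftrightarrow> (\<forall>vs. \<forall>p\<in>U. Dl vs g differentiable (at p))"

definition almost_complex_on :: "('a::real_normed_vector) set \<Rightarrow> ('a \<Rightarrow> 'a \<Rightarrow> 'a) \<Rightarrow> bool" where
  "almost_complex_on U J \<longleftrightarrow>
     (\<forall>p\<in>U. linear (J p) \<and> (\<forall>v. J p (J p v) = - v)) \<and> (\<forall>v. smooth_on U (\<lambda>p. J p v))"

text \<open>Complexified tangent vectors: a pair (u,w) stands for u + i w.\<close>
definition cJ :: "('a \<Rightarrow> 'a \<Rightarrow> 'a) \<Rightarrow> 'a \<Rightarrow> 'a \<times> 'a \<Rightarrow> 'a \<times> 'a" where
  "cJ J p uw = (J p (fst uw), J p (snd uw))"

definition cmult_i :: "('a::ab_group_add) \<times> 'a \<Rightarrow> 'a \<times> 'a" where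
  "cmult_i uw = (- snd uw, fst uw)"

definition T10 :: "('a::ab_group_add \<Rightarrow> 'a \<Rightarrow> 'a) \<Rightarrow> 'a \<Rightarrow> ('a \<times> 'a) set" where
  "T10 J p = {uw. cJ J p uw = cmult_i uw}"

definition T01 :: "('a::ab_group_add \<Rightarrow> 'a \<Rightarrow> 'a) \<Rightarrow> 'a \<Rightarrow> ('a \<times> 'a) set" where
  "T01 J p = {uw. cJ J p uw = - cmult_i uw}"

definition cdiff :: "('a::real_normed_vector \<Rightarrow> complex) \<Rightarrow> 'a \<Rightarrow> 'a \<times> 'a \<Rightarrow> complex" where
  "cdiff f p uw = frechet_derivative f (at p) (fst uw) + \<i> * frechet_derivative f (at p) (snd uw)"

definition J_holomorphic_on ::
  "('a::real_normed_vector) set \<Rightarrow> ('a \<Rightarrow> 'a \<Rightarrow> 'a) \<Rightarrow> ('a \<Rightarrow> complex) \<Rightarrow> bool" where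
  "J_holomorphic_on U J f \<longleftrightarrow> smooth_on U f \<and> (\<forall>p\<in>U. \<forall>uw\<in>T01 J p. cdiff f p uw = 0)"

text \<open>Coordinate vector d/dz^k = 1/2 (d/dx^k - i d/dy^k), as a complexified vector.\<close>
definition dz_vec :: "'n::finite \<Rightarrow> (complex^'n) \<times> (complex^'n)" where
  "dz_vec k = ((1/2) *\<^sub>R axis k 1, - ((1/2) *\<^sub>R axis k \<i>))"

definition dz :: "'n::finite \<Rightarrow> (complex^'n \<Rightarrow> complex) \<Rightarrow> complex^'n \<Rightarrow> complex" where
  "dz k g = (\<lambda>p. cdiff g p (dz_vec k))"

definition dz_multi :: "('n::{finite,linorder} \<Rightarrow> nat) \<Rightarrow> ((complex, 'n) vec \<Rightarrow> complex) \<Rightarrow> (complex, 'n) vec \<Rightarrow> complex" where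
  "dz_multi \<alpha> g = foldr (\<lambda>k h. (dz k ^^ \<alpha> k) h) (sorted_list_of_set UNIV) g"

definition multi_deg :: "('n::finite \<Rightarrow> nat) \<Rightarrow> nat" where
  "multi_deg \<alpha> = (\<Sum>k\<in>UNIV. \<alpha> k)"

definition real_coord_dirs :: "(complex^('n::finite)) set" where
  "real_coord_dirs = {axis k 1 | k. True} \<union> {axis k \<i> | k. True}"

definition vanishes_to_order :: "(complex^('n::finite) \<Rightarrow> complex) \<Rightarrow> complex^'n \<Rightarrow> nat \<Rightarrow> bool" where
  "vanishes_to_order f x0 k \<longleftrightarrow>
     (\<forall>vs. set vs \<subseteq> real_coord_dirs \<and> length vs < k \<longrightarrow> Dl vs f x0 = 0)"

definition ord_at :: "(complex^('n::finite) \<Rightarrow> complex) \<Rightarrow> complex^'n \<Rightarrow> enat" where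
  "ord_at f x0 = (SUP k\<in>{k. vanishes_to_order f x0 k}. enat k)"

end

(*
  Iterated derivatives of f in the Wirtinger directions d/dz^k and d/dzbar^k commute
  (symmetry of second derivatives, in Young's form: differentiability of the first
  partials suffices), and the real partial derivatives are linear combinations of them.  It therefore suffices to show that every mixed Wirtinger
  derivative of f of order at most m vanishes at o.

  Holomorphy means df (J v) = i df v, so d/dzbar^k f = df (V_k) for the real vector field
  V_k = (d/dx^k + J d/dy^k)/2, which vanishes at o because d/dz^k is of type (1,0) at o.
  Expanding V_k in the coordinate frame writes d/dzbar^k f as a sum of products of
  functions vanishing at o with first partials of f, so by the Leibniz rule d/dzbar^k f
  vanishes at o to the same order as f.  Now induct on the order r: a mixed derivative of
  order r either involves only the d/dz^k, and vanishes by hypothesis, or, applying one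
  d/dzbar^k first, is a derivative of order r - 1 of d/dzbar^k f.
*)

theory Submission
  imports Defs
begin

section \<open>Symmetry of second derivatives\<close>

lemma has_vector_derivative_along_line:
  assumes "g differentiable at (a + s *\<^sub>R u)"
  shows "((\<lambda>s. g (a + s *\<^sub>R u)) has_vector_derivative frechet_derivative g (at (a + s *\<^sub>R u)) u)
           (at s within S)"
proof -
  have line: "((\<lambda>s. a + s *\<^sub>R u) has_derivative (\<lambda>x. x *\<^sub>R u)) (at s within S)"
    by (auto intro!: derivative_eq_intros)
  have g': "(g has_derivative frechet_derivative g (at (a + s *\<^sub>R u))) (at (a + s *\<^sub>R u))"
    using assms frechet_derivative_works by blast
  have "linear (frechet_derivative g (at (a + s *\<^sub>R u)))"
    using assms by (rule linear_frechet_derivative)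
  then show ?thesis
    using diff_chain_within[OF line has_derivative_at_withinI[OF g']]
    by (simp add: has_vector_derivative_def o_def linear_scale)
qed

lemma norm_diff_le_of_vector_derivative_bound:
  fixes \<phi> :: "real \<Rightarrow> 'b::real_normed_vector"
  assumes "0 \<le> t"
    and "\<And>s. s \<in> {0..t} \<Longrightarrow> (\<phi> has_vector_derivative \<phi>' s) (at s within {0..t})"
    and "\<And>s. s \<in> {0..t} \<Longrightarrow> norm (\<phi>' s) \<le> B"
  shows "norm (\<phi> t - \<phi> 0) \<le> B * t"
proof -
  have "onorm (\<lambda>x. x *\<^sub>R \<phi>' s) = norm (\<phi>' s)" for s
    using onorm_scaleR_left[OF bounded_linear_ident] by (simp add: onorm_id)
  then have "norm (\<phi> t - \<phi> 0) \<le> B * norm (t - 0)"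
    using assms by (intro differentiable_bound[of "{0..t}" \<phi> "\<lambda>s x. x *\<^sub>R \<phi>' s"])
      (auto simp: has_vector_derivative_def)
  with assms(1) show ?thesis by simp
qed

lemma norm_scaleR_add_scaleR_le:
  assumes "s \<in> {0..t}" "t' \<in> {0..t}"
  shows "norm (s *\<^sub>R u + t' *\<^sub>R w) \<le> t * (norm u + norm w)"
proof -
  have "norm (s *\<^sub>R u + t' *\<^sub>R w) \<le> s * norm u + t' * norm w"
    using assms norm_triangle_ineq[of "s *\<^sub>R u" "t' *\<^sub>R w"] by simp
  also have "\<dots> \<le> t * (norm u + norm w)"
    using assms mult_right_mono[of s t "norm u"] mult_right_mono[of t' t "norm w"]
    by (simp add: algebra_simps)
  finally show ?thesis .
qed

text \<open>Mean value theorem for \<open>s \<mapsto> g (p + t w + s u) - g (p + s u) - s t H w\<close>, whose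
  derivative is the difference of two linearisation errors of \<open>q \<mapsto> D g (q) u\<close> at \<open>p\<close>.\<close>
lemma second_difference_mean_value:
  fixes g :: "'a::real_normed_vector \<Rightarrow> 'b::real_normed_vector"
  assumes "0 \<le> t" and H: "linear H"
    and diff: "\<And>k. norm k \<le> t * (norm u + norm w) \<Longrightarrow> g differentiable at (p + k)"
    and err: "\<And>k. norm k \<le> t * (norm u + norm w) \<Longrightarrow>
      norm (frechet_derivative g (at (p + k)) u - frechet_derivative g (at p) u - H k) \<le> B"
  shows "norm (g (p + t *\<^sub>R u + t *\<^sub>R w) - g (p + t *\<^sub>R u) - g (p + t *\<^sub>R w) + g p
               - (t * t) *\<^sub>R H w) \<le> 2 * B * t"
proof -
  interpret H: linear H by (rule H)
  define E where
    "E k = frechet_derivative g (at (p + k)) u - frechet_derivative g (at p) u - H k" for k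
  define \<phi> where "\<phi> s = g (p + t *\<^sub>R w + s *\<^sub>R u) - g (p + s *\<^sub>R u) - s *\<^sub>R (t *\<^sub>R H w)" for s
  define \<phi>' where "\<phi>' s = E (s *\<^sub>R u + t *\<^sub>R w) - E (s *\<^sub>R u)" for s
  have small: "norm (s *\<^sub>R u + t *\<^sub>R w) \<le> t * (norm u + norm w)"
    "norm (s *\<^sub>R u) \<le> t * (norm u + norm w)" if "s \<in> {0..t}" for s
    using norm_scaleR_add_scaleR_le[OF that, of t u w] norm_scaleR_add_scaleR_le[OF that, of 0 u w]
      \<open>0 \<le> t\<close> by simp_all
  have "(\<phi> has_vector_derivative \<phi>' s) (at s within {0..t})" if s: "s \<in> {0..t}" for s
  proof -
    have "g differentiable at (p + t *\<^sub>R w + s *\<^sub>R u)" "g differentiable at (p + s *\<^sub>R u)"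
      using diff[OF small(1)[OF s]] diff[OF small(2)[OF s]] by (simp_all add: add_ac)
    note lines = this[THEN has_vector_derivative_along_line]
    have "((\<lambda>s. s *\<^sub>R (t *\<^sub>R H w)) has_vector_derivative t *\<^sub>R H w) (at s within {0..t})"
      by (auto simp: has_vector_derivative_def intro!: derivative_eq_intros)
    from has_vector_derivative_diff[OF has_vector_derivative_diff[OF lines] this]
    show ?thesis
      unfolding \<phi>_def \<phi>'_def E_def by (simp add: H.add H.scale algebra_simps)
  qed
  moreover have "norm (\<phi>' s) \<le> 2 * B" if s: "s \<in> {0..t}" for s
    using err[OF small(1)[OF s]] err[OF small(2)[OF s]]
      norm_triangle_ineq4[of "E (s *\<^sub>R u + t *\<^sub>R w)" "E (s *\<^sub>R u)"]
    unfolding \<phi>'_def E_def by linarith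
  ultimately have "norm (\<phi> t - \<phi> 0) \<le> 2 * B * t"
    using \<open>0 \<le> t\<close> by (intro norm_diff_le_of_vector_derivative_bound) auto
  then show ?thesis
    unfolding \<phi>_def by (simp add: algebra_simps)
qed

lemma second_difference_approx:
  fixes g :: "'a::real_normed_vector \<Rightarrow> 'b::real_normed_vector"
  assumes "open U" "p \<in> U" "\<And>q. q \<in> U \<Longrightarrow> g differentiable at q"
    and H: "((\<lambda>q. frechet_derivative g (at q) u) has_derivative H) (at p)" and "e > 0"
  shows "\<exists>d>0. \<forall>t. 0 < t \<and> t < d \<longrightarrow>
           norm (g (p + t *\<^sub>R u + t *\<^sub>R w) - g (p + t *\<^sub>R u) - g (p + t *\<^sub>R w) + g p
                 - (t * t) *\<^sub>R H w) \<le> e * (t * t)"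
proof -
  define K where "K = norm u + norm w + 1"
  have K: "K > 0" unfolding K_def by (simp add: add_nonneg_pos)
  obtain d1 where d1: "d1 > 0" "\<And>k. norm k < d1 \<Longrightarrow>
      norm (frechet_derivative g (at (p + k)) u - frechet_derivative g (at p) u - H k)
        \<le> e / (2 * K) * norm k"
    using H \<open>e > 0\<close> K unfolding has_derivative_at_alt
    by (metis (no_types, lifting) add_diff_cancel_left' divide_pos_pos mult_pos_pos
        zero_less_numeral)
  obtain r where r: "r > 0" "ball p r \<subseteq> U" using assms(1,2) openE by blast
  show ?thesis
  proof (intro exI[of _ "min d1 r / K"] conjI allI impI)
    show "min d1 r / K > 0" using d1 r K by simp
    fix t :: real assume t: "0 < t \<and> t < min d1 r / K"
    then have tK: "t * K < d1" "t * K < r" using K by (simp_all add: pos_less_divide_eq)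
    have "t * (norm u + norm w) < t * K" using t unfolding K_def by (simp add: algebra_simps)
    then have small: "norm k < d1" "norm k < r" "norm k \<le> t * K"
      if "norm k \<le> t * (norm u + norm w)" for k :: 'a
      using that tK by linarith+
    have "g differentiable at (p + k)" if "norm k \<le> t * (norm u + norm w)" for k
    proof -
      have "p + k \<in> ball p r" using small(2)[OF that] by (simp add: dist_norm)
      then show ?thesis using r(2) assms(3) by blast
    qed
    moreover have "norm (frechet_derivative g (at (p + k)) u - frechet_derivative g (at p) u - H k)
        \<le> e * t / 2" if "norm k \<le> t * (norm u + norm w)" for k
    proof -
      have "e / (2 * K) * norm k \<le> e / (2 * K) * (t * K)"
        using small(3)[OF that] \<open>e > 0\<close> K by (intro mult_left_mono) auto
      also have "\<dots> = e * t / 2" using K by (simp add: field_simps)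
      finally show ?thesis using d1(2)[OF small(1)[OF that]] by linarith
    qed
    ultimately have "norm (g (p + t *\<^sub>R u + t *\<^sub>R w) - g (p + t *\<^sub>R u) - g (p + t *\<^sub>R w) + g p
        - (t * t) *\<^sub>R H w) \<le> 2 * (e * t / 2) * t"
      using t by (intro second_difference_mean_value[OF _ has_derivative_linear[OF H]]) auto
    then show "norm (g (p + t *\<^sub>R u + t *\<^sub>R w) - g (p + t *\<^sub>R u) - g (p + t *\<^sub>R w) + g p
                 - (t * t) *\<^sub>R H w) \<le> e * (t * t)"
      by simp
  qed
qed

lemma frechet_derivative_partials_commute:
  fixes g :: "'a::real_normed_vector \<Rightarrow> 'b::real_normed_vector"
  assumes "open U" "p \<in> U" "\<And>q. q \<in> U \<Longrightarrow> g differentiable at q"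
    and "(\<lambda>q. frechet_derivative g (at q) u) differentiable at p"
    and "(\<lambda>q. frechet_derivative g (at q) w) differentiable at p"
  shows "frechet_derivative (\<lambda>q. frechet_derivative g (at q) u) (at p) w
       = frechet_derivative (\<lambda>q. frechet_derivative g (at q) w) (at p) u"
    (is "?A = ?B")
proof (rule ccontr)
  assume "?A \<noteq> ?B"
  define e where "e = norm (?A - ?B) / 4"
  have e: "e > 0" using \<open>?A \<noteq> ?B\<close> unfolding e_def by simp
  obtain d1 where d1: "d1 > 0" "\<And>t. 0 < t \<and> t < d1 \<Longrightarrow>
      norm (g (p + t *\<^sub>R u + t *\<^sub>R w) - g (p + t *\<^sub>R u) - g (p + t *\<^sub>R w) + g p - (t * t) *\<^sub>R ?A)
        \<le> e * (t * t)"
    using second_difference_approx[OF assms(1-3) assms(4)[unfolded frechet_derivative_works] e]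
    by blast
  obtain d2 where d2: "d2 > 0" "\<And>t. 0 < t \<and> t < d2 \<Longrightarrow>
      norm (g (p + t *\<^sub>R w + t *\<^sub>R u) - g (p + t *\<^sub>R w) - g (p + t *\<^sub>R u) + g p - (t * t) *\<^sub>R ?B)
        \<le> e * (t * t)"
    using second_difference_approx[OF assms(1-3) assms(5)[unfolded frechet_derivative_works] e]
    by blast
  define t where "t = min d1 d2 / 2"
  have t: "0 < t" "t < d1" "t < d2" unfolding t_def using d1 d2 by auto
  define X where "X = g (p + t *\<^sub>R u + t *\<^sub>R w) - g (p + t *\<^sub>R u) - g (p + t *\<^sub>R w) + g p"
  have "norm (X - (t * t) *\<^sub>R ?A) \<le> e * (t * t)" "norm (X - (t * t) *\<^sub>R ?B) \<le> e * (t * t)"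
    using d1(2)[of t] d2(2)[of t] t unfolding X_def by (simp_all add: algebra_simps)
  then have "norm ((t * t) *\<^sub>R (?A - ?B)) \<le> 2 * e * (t * t)"
    using norm_triangle_ineq4[of "X - (t * t) *\<^sub>R ?B" "X - (t * t) *\<^sub>R ?A"]
    by (simp add: algebra_simps)
  then have "(t * t) * norm (?A - ?B) \<le> (t * t) * (norm (?A - ?B) / 2)"
    using t unfolding e_def by simp
  then show False using t \<open>?A \<noteq> ?B\<close> by (simp add: mult_le_cancel_left_pos)
qed

section \<open>Smooth functions\<close>

lemma frechet_derivative_eq_on_open:
  assumes "open U" "p \<in> U" "\<And>q. q \<in> U \<Longrightarrow> f q = g q"
  shows "frechet_derivative f (at p) = frechet_derivative g (at p)"
proof -
  have "(f has_derivative D) (at p) \<longleftrightarrow> (g has_derivative D) (at p)" for D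
    using has_derivative_transform_within_open[OF _ assms(1,2)] assms(3) by metis
  then show ?thesis unfolding frechet_derivative_def by simp
qed

lemma differentiable_transform_within_open:
  assumes "f differentiable at p" "open U" "p \<in> U" "\<And>q. q \<in> U \<Longrightarrow> f q = g q"
  shows "g differentiable at p"
  using assms by (meson differentiable_def has_derivative_transform_within_open)

lemma frechet_derivative_add:
  assumes "f differentiable at p" "g differentiable at p"
  shows "frechet_derivative (\<lambda>q. f q + g q) (at p) x
       = frechet_derivative f (at p) x + frechet_derivative g (at p) x"
  using frechet_derivative_at[OF has_derivative_add[OF assms[unfolded frechet_derivative_works]]]
  by (rule fun_cong[symmetric])

lemma frechet_derivative_bounded_linear:
  assumes "bounded_linear L" "f differentiable at p"
  shows "frechet_derivative (\<lambda>q. L (f q)) (at p) x = L (frechet_derivative f (at p) x)"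
  using frechet_derivative_at[OF bounded_linear.has_derivative[OF assms(1)
        assms(2)[unfolded frechet_derivative_works]]]
  by (rule fun_cong[symmetric])

lemma frechet_derivative_mult:
  fixes f g :: "'a::real_normed_vector \<Rightarrow> 'b::real_normed_algebra"
  assumes "f differentiable at p" "g differentiable at p"
  shows "frechet_derivative (\<lambda>q. f q * g q) (at p) x
       = f p * frechet_derivative g (at p) x + frechet_derivative f (at p) x * g p"
  using frechet_derivative_at[OF has_derivative_mult[OF assms[unfolded frechet_derivative_works]]]
  by (rule fun_cong[symmetric])

lemma Dl_append: "Dl (xs @ ys) g = Dl xs (Dl ys g)"
  by (induction xs) auto

lemma Dl_eq_on_open:
  assumes "open U" "\<And>q. q \<in> U \<Longrightarrow> f q = g q" "p \<in> U"
  shows "Dl vs f p = Dl vs g p"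
  using assms(3)
proof (induction vs arbitrary: p)
  case Nil
  then show ?case using assms(2) by simp
next
  case (Cons v vs)
  have "frechet_derivative (Dl vs f) (at p) = frechet_derivative (Dl vs g) (at p)"
    by (rule frechet_derivative_eq_on_open[OF assms(1) Cons.prems Cons.IH])
  then show ?case by simp
qed

lemma Dl_const: "Dl vs (\<lambda>_. c) = (\<lambda>_. if vs = [] then c else 0)"
  by (induction vs) auto

lemma smooth_on_imp_differentiable: "smooth_on U g \<Longrightarrow> p \<in> U \<Longrightarrow> g differentiable at p"
  unfolding smooth_on_def by (drule spec[of _ "[]"]) simp

lemma smooth_on_frechet_derivative:
  assumes "smooth_on U g"
  shows "smooth_on U (\<lambda>p. frechet_derivative g (at p) v)"
proof -
  have "Dl vs (\<lambda>p. frechet_derivative g (at p) v) = Dl (vs @ [v]) g" for vs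
    by (simp add: Dl_append)
  with assms show ?thesis unfolding smooth_on_def by metis
qed

lemma smooth_on_const: "smooth_on U (\<lambda>_. c)"
  unfolding smooth_on_def Dl_const by simp

lemma smooth_on_bounded_linear:
  assumes U: "open U" and L: "bounded_linear L" and g: "smooth_on U g"
  shows "smooth_on U (\<lambda>q. L (g q))"
proof -
  have Dl_L: "Dl vs (\<lambda>q. L (g q)) p = L (Dl vs g p)" if "p \<in> U" for vs p
    using that
  proof (induction vs arbitrary: p)
    case (Cons v vs)
    have "Dl (v # vs) (\<lambda>q. L (g q)) p = frechet_derivative (\<lambda>q. L (Dl vs g q)) (at p) v"
      using frechet_derivative_eq_on_open[OF U Cons.prems Cons.IH] by simp
    also have "\<dots> = L (Dl (v # vs) g p)"
      using g Cons.prems frechet_derivative_bounded_linear[OF L, of "Dl vs g" p]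
      unfolding smooth_on_def by simp
    finally show ?case .
  qed simp
  have L_Dl: "(\<lambda>q. L (Dl vs g q)) differentiable at p" if "p \<in> U" for vs p
    using differentiable_compose[OF bounded_linear_imp_differentiable[OF L]] g that
    unfolding smooth_on_def by blast
  show ?thesis
    unfolding smooth_on_def
  proof (intro allI ballI)
    fix vs p assume p: "p \<in> U"
    show "Dl vs (\<lambda>q. L (g q)) differentiable at p"
      by (rule differentiable_transform_within_open[OF L_Dl[OF p] U p]) (simp add: Dl_L)
  qed
qed

text \<open>A finite-order version of \<^const>\<open>smooth_on\<close>: smoothness of products is proved by
  induction on the order.\<close>
definition differentiable_upto ::
    "nat \<Rightarrow> 'a::real_normed_vector set \<Rightarrow> ('a \<Rightarrow> 'b::real_normed_vector) \<Rightarrow> bool" where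
  "differentiable_upto n U g \<longleftrightarrow>
     (\<forall>ws. length ws \<le> n \<longrightarrow> (\<forall>p\<in>U. Dl ws g differentiable at p))"

lemma smooth_on_iff_differentiable_upto: "smooth_on U g \<longleftrightarrow> (\<forall>n. differentiable_upto n U g)"
  unfolding smooth_on_def differentiable_upto_def by blast

lemma Dl_add_upto:
  assumes U: "open U" and g: "differentiable_upto n U g" and h: "differentiable_upto n U h"
  shows "length vs \<le> n \<Longrightarrow> p \<in> U \<Longrightarrow> Dl vs (\<lambda>q. g q + h q) p = Dl vs g p + Dl vs h p"
proof (induction vs arbitrary: p)
  case (Cons v vs)
  then have "Dl (v # vs) (\<lambda>q. g q + h q) p
      = frechet_derivative (\<lambda>q. Dl vs g q + Dl vs h q) (at p) v"
    using frechet_derivative_eq_on_open[OF U \<open>p \<in> U\<close>, of "Dl vs (\<lambda>q. g q + h q)"] by simp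
  also have "\<dots> = Dl (v # vs) g p + Dl (v # vs) h p"
    using g h Cons.prems frechet_derivative_add[of "Dl vs g" p "Dl vs h"]
    unfolding differentiable_upto_def by simp
  finally show ?case .
qed simp

lemma differentiable_upto_add:
  assumes U: "open U" and g: "differentiable_upto n U g" and h: "differentiable_upto n U h"
  shows "differentiable_upto n U (\<lambda>q. g q + h q)"
  unfolding differentiable_upto_def
proof (intro allI impI ballI)
  fix ws :: "'a list" and p assume ws: "length ws \<le> n" and p: "p \<in> U"
  have "(\<lambda>q. Dl ws g q + Dl ws h q) differentiable at p"
    using g h ws p unfolding differentiable_upto_def by auto
  then show "Dl ws (\<lambda>q. g q + h q) differentiable at p"
    by (rule differentiable_transform_within_open[OF _ U p]) (simp add: Dl_add_upto[OF U g h ws])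
qed

lemma smooth_on_add:
  "open U \<Longrightarrow> smooth_on U g \<Longrightarrow> smooth_on U h \<Longrightarrow> smooth_on U (\<lambda>q. g q + h q)"
  unfolding smooth_on_iff_differentiable_upto by (blast intro: differentiable_upto_add)

lemma smooth_on_sum:
  assumes "open U" "finite S" "\<And>j. j \<in> S \<Longrightarrow> smooth_on U (F j)"
  shows "smooth_on U (\<lambda>q. \<Sum>j\<in>S. F j q)"
  using assms(2,3)
  by (induction S rule: finite_induct) (auto intro: smooth_on_const smooth_on_add[OF assms(1)])

lemma differentiable_upto_mult:
  fixes b h :: "'a::real_normed_vector \<Rightarrow> 'b::real_normed_algebra"
  assumes U: "open U"
  shows "smooth_on U b \<Longrightarrow> smooth_on U h \<Longrightarrow> differentiable_upto n U (\<lambda>q. b q * h q)"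
proof (induction n arbitrary: b h)
  case 0
  then show ?case unfolding differentiable_upto_def by (auto simp: smooth_on_imp_differentiable)
next
  case (Suc n)
  show ?case unfolding differentiable_upto_def
  proof (intro allI impI ballI)
    fix ws :: "'a list" and p assume ws: "length ws \<le> Suc n" and p: "p \<in> U"
    show "Dl ws (\<lambda>q. b q * h q) differentiable at p"
    proof (cases ws rule: rev_exhaust)
      case Nil
      then show ?thesis using Suc.prems p by (auto simp: smooth_on_imp_differentiable)
    next
      case (snoc xs v)
      define b' where "b' q = frechet_derivative b (at q) v" for q
      define h' where "h' q = frechet_derivative h (at q) v" for q
      have "smooth_on U b'" "smooth_on U h'"
        unfolding b'_def h'_def using Suc.prems by (auto intro: smooth_on_frechet_derivative)
      then have "differentiable_upto n U (\<lambda>q. b q * h' q + b' q * h q)"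
        using Suc.IH Suc.prems by (intro differentiable_upto_add[OF U]) simp_all
      then have "Dl xs (\<lambda>q. b q * h' q + b' q * h q) differentiable at p"
        using ws snoc p unfolding differentiable_upto_def by simp
      moreover have "Dl xs (\<lambda>q. b q * h' q + b' q * h q) q = Dl ws (\<lambda>q. b q * h q) q"
        if "q \<in> U" for q
      proof -
        have "b q * h' q + b' q * h q = frechet_derivative (\<lambda>q. b q * h q) (at q) v"
          if "q \<in> U" for q
          unfolding b'_def h'_def using Suc.prems that
          by (intro frechet_derivative_mult[symmetric] smooth_on_imp_differentiable)
        from Dl_eq_on_open[OF U this \<open>q \<in> U\<close>] show ?thesis
          unfolding snoc Dl_append by simp
      qed
      ultimately show ?thesis using differentiable_transform_within_open[OF _ U p] by blast
    qed
  qed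
qed

lemma smooth_on_mult:
  fixes b h :: "'a::real_normed_vector \<Rightarrow> 'b::real_normed_algebra"
  shows "open U \<Longrightarrow> smooth_on U b \<Longrightarrow> smooth_on U h \<Longrightarrow> smooth_on U (\<lambda>q. b q * h q)"
  unfolding smooth_on_iff_differentiable_upto[of U "\<lambda>q. b q * h q"]
  using differentiable_upto_mult by blast

section \<open>Iterated complexified derivatives\<close>

fun Dc :: "('a \<times> 'a) list \<Rightarrow> ('a::real_normed_vector \<Rightarrow> complex) \<Rightarrow> 'a \<Rightarrow> complex" where
  "Dc [] g = g"
| "Dc (c # cs) g = (\<lambda>p. cdiff (Dc cs g) p c)"

lemma Dc_append: "Dc (xs @ ys) g = Dc xs (Dc ys g)"
  by (induction xs) auto

lemma cdiff_eq_on_open: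
  assumes "open U" "p \<in> U" "\<And>q. q \<in> U \<Longrightarrow> f q = g q"
  shows "cdiff f p c = cdiff g p c"
  by (simp add: cdiff_def frechet_derivative_eq_on_open[OF assms])

lemma Dc_eq_on_open:
  assumes U: "open U" and fg: "\<And>q. q \<in> U \<Longrightarrow> f q = g q"
  shows "p \<in> U \<Longrightarrow> Dc cs f p = Dc cs g p"
proof (induction cs arbitrary: p)
  case (Cons c cs)
  from cdiff_eq_on_open[OF U Cons.prems Cons.IH] show ?case by simp
qed (use fg in simp)

lemma smooth_on_cdiff:
  assumes U: "open U" and g: "smooth_on U g"
  shows "smooth_on U (\<lambda>p. cdiff g p c)"
  unfolding cdiff_def
  by (rule smooth_on_add[OF U smooth_on_frechet_derivative[OF g] smooth_on_bounded_linear[OF U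
        bounded_linear_mult_right smooth_on_frechet_derivative[OF g]]])

lemma smooth_on_Dc: "open U \<Longrightarrow> smooth_on U g \<Longrightarrow> smooth_on U (Dc cs g)"
  by (induction cs) (auto intro: smooth_on_cdiff)

lemma cdiff_add:
  assumes "f differentiable at p" "g differentiable at p"
  shows "cdiff (\<lambda>q. f q + g q) p c = cdiff f p c + cdiff g p c"
  using frechet_derivative_add[OF assms] by (simp add: cdiff_def algebra_simps)

lemma cdiff_mult:
  assumes "f differentiable at p" "g differentiable at p"
  shows "cdiff (\<lambda>q. f q * g q) p c = f p * cdiff g p c + cdiff f p c * g p"
  using frechet_derivative_mult[OF assms] by (simp add: cdiff_def algebra_simps)

lemma Dc_zero: "Dc cs (\<lambda>_. 0) = (\<lambda>_. 0)"
  by (induction cs) (auto simp: cdiff_def)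

lemma Dc_add:
  assumes U: "open U" and f: "smooth_on U f" and g: "smooth_on U g"
  shows "p \<in> U \<Longrightarrow> Dc cs (\<lambda>q. f q + g q) p = Dc cs f p + Dc cs g p"
proof (induction cs arbitrary: p)
  case (Cons c cs)
  have "Dc (c # cs) (\<lambda>q. f q + g q) p = cdiff (\<lambda>q. Dc cs f q + Dc cs g q) p c"
    using cdiff_eq_on_open[OF U Cons.prems Cons.IH] by simp
  also have "\<dots> = Dc (c # cs) f p + Dc (c # cs) g p"
    using cdiff_add[OF smooth_on_imp_differentiable[OF smooth_on_Dc[OF U f] Cons.prems]
        smooth_on_imp_differentiable[OF smooth_on_Dc[OF U g] Cons.prems]] by simp
  finally show ?case .
qed simp

lemma Dc_commute:
  assumes U: "open U" and g: "smooth_on U g" and p: "p \<in> U"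
  shows "Dc [c1, c2] g p = Dc [c2, c1] g p"
proof -
  define S where "S a b = frechet_derivative (\<lambda>q. frechet_derivative g (at q) a) (at p) b" for a b
  have g': "(\<lambda>q. frechet_derivative g (at q) a) differentiable at p" for a
    by (rule smooth_on_imp_differentiable[OF smooth_on_frechet_derivative[OF g] p])
  have S_sym: "S a b = S b a" for a b
    unfolding S_def using smooth_on_imp_differentiable[OF g]
    by (intro frechet_derivative_partials_commute[OF U p _ g' g'])
  have Dc2: "Dc [(u1, w1), (u2, w2)] g p = S u2 u1 + \<i> * S w2 u1 + \<i> * (S u2 w1 + \<i> * S w2 w1)"
    for u1 w1 u2 w2
  proof -
    have "(\<lambda>q. \<i> * frechet_derivative g (at q) w2) differentiable at p"
      by (intro differentiable_compose[OF bounded_linear_imp_differentiable[OF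
            bounded_linear_mult_right] g'])
    then have "frechet_derivative (\<lambda>q. cdiff g q (u2, w2)) (at p) x = S u2 x + \<i> * S w2 x" for x
      unfolding S_def cdiff_def
      using frechet_derivative_add[OF g']
        frechet_derivative_bounded_linear[OF bounded_linear_mult_right g']
      by simp
    then show ?thesis by (simp add: cdiff_def)
  qed
  obtain u1 w1 u2 w2 where c: "c1 = (u1, w1)" "c2 = (u2, w2)" by fastforce
  show ?thesis unfolding c Dc2 using S_sym[of u1 u2] S_sym[of w1 u2] S_sym[of u1 w2] S_sym[of w1 w2]
    by (simp add: algebra_simps)
qed

lemma Dc_swap:
  assumes U: "open U" and g: "smooth_on U g" and p: "p \<in> U"
  shows "Dc (xs @ c1 # c2 # ys) g p = Dc (xs @ c2 # c1 # ys) g p"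
proof -
  have "Dc xs (Dc [c1, c2] (Dc ys g)) p = Dc xs (Dc [c2, c1] (Dc ys g)) p"
    by (rule Dc_eq_on_open[OF U _ p]) (rule Dc_commute[OF U smooth_on_Dc[OF U g]])
  then show ?thesis by (simp only: Dc_append[symmetric] append_Cons append_Nil)
qed

lemma Dc_move_to_front:
  assumes U: "open U" and g: "smooth_on U g"
  shows "p \<in> U \<Longrightarrow> Dc (xs @ c # ys) g p = Dc (c # xs @ ys) g p"
proof (induction xs arbitrary: p)
  case (Cons x xs)
  have "Dc ((x # xs) @ c # ys) g p = Dc ([] @ x # c # xs @ ys) g p"
    using cdiff_eq_on_open[OF U Cons.prems Cons.IH] by simp
  also have "\<dots> = Dc ([] @ c # x # xs @ ys) g p"
    by (rule Dc_swap[OF U g Cons.prems])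
  finally show ?case by simp
qed simp

lemma Dc_mset_eq:
  assumes U: "open U" and g: "smooth_on U g"
  shows "mset cs = mset cs' \<Longrightarrow> p \<in> U \<Longrightarrow> Dc cs g p = Dc cs' g p"
proof (induction cs arbitrary: cs' p)
  case (Cons c cs)
  then have "c \<in> set cs'" by (metis list.set_intros(1) set_mset_mset)
  then obtain xs ys where cs': "cs' = xs @ c # ys" by (meson split_list)
  then have "mset cs = mset (xs @ ys)" using Cons.prems(1) by simp
  then have "Dc (c # cs) g p = Dc (c # xs @ ys) g p"
    using cdiff_eq_on_open[OF U Cons.prems(2) Cons.IH] by simp
  also have "\<dots> = Dc cs' g p"
    unfolding cs' by (rule Dc_move_to_front[OF U g Cons.prems(2), symmetric])
  finally show ?case .
qed simp

definition vanishes_along ::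
    "('a \<times> 'a) set \<Rightarrow> ('a::real_normed_vector \<Rightarrow> complex) \<Rightarrow> 'a \<Rightarrow> nat \<Rightarrow> bool" where
  "vanishes_along A g x0 r \<longleftrightarrow> (\<forall>cs. set cs \<subseteq> A \<and> length cs < r \<longrightarrow> Dc cs g x0 = 0)"

lemma vanishes_alongI:
  "(\<And>cs. set cs \<subseteq> A \<Longrightarrow> length cs < r \<Longrightarrow> Dc cs g x0 = 0) \<Longrightarrow> vanishes_along A g x0 r"
  unfolding vanishes_along_def by blast

lemma vanishes_alongD:
  "vanishes_along A g x0 r \<Longrightarrow> set cs \<subseteq> A \<Longrightarrow> length cs < r \<Longrightarrow> Dc cs g x0 = 0"
  unfolding vanishes_along_def by blast

lemma vanishes_along_0: "vanishes_along A g x0 0"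
  unfolding vanishes_along_def by simp

lemma vanishes_along_mono: "vanishes_along A g x0 r \<Longrightarrow> r' \<le> r \<Longrightarrow> vanishes_along A g x0 r'"
  unfolding vanishes_along_def by auto

lemma vanishes_along_cdiff:
  assumes "vanishes_along A g x0 (Suc r)" "c \<in> A"
  shows "vanishes_along A (\<lambda>q. cdiff g q c) x0 r"
proof (rule vanishes_alongI)
  fix cs assume "set cs \<subseteq> A" "length cs < r"
  then show "Dc cs (\<lambda>q. cdiff g q c) x0 = 0"
    using vanishes_alongD[OF assms(1), of "cs @ [c]"] assms(2) by (simp add: Dc_append)
qed

context
  fixes U :: "'a::real_normed_vector set" and x0 :: 'a
  assumes U: "open U" and x0: "x0 \<in> U"
begin

lemma vanishes_along_eq_on_open:
  "(\<And>q. q \<in> U \<Longrightarrow> f q = g q) \<Longrightarrow> vanishes_along A f x0 r \<Longrightarrow> vanishes_along A g x0 r"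
  unfolding vanishes_along_def using Dc_eq_on_open[OF U _ x0] by metis

lemma vanishes_along_add:
  "smooth_on U f \<Longrightarrow> smooth_on U g \<Longrightarrow> vanishes_along A f x0 r \<Longrightarrow> vanishes_along A g x0 r
    \<Longrightarrow> vanishes_along A (\<lambda>q. f q + g q) x0 r"
  unfolding vanishes_along_def using Dc_add[OF U _ _ x0] by simp

lemma vanishes_along_sum:
  assumes "finite S" "\<And>j. j \<in> S \<Longrightarrow> smooth_on U (F j)" "\<And>j. j \<in> S \<Longrightarrow> vanishes_along A (F j) x0 r"
  shows "vanishes_along A (\<lambda>q. \<Sum>j\<in>S. F j q) x0 r"
  using assms
proof (induction S rule: finite_induct)
  case empty
  then show ?case unfolding vanishes_along_def by (simp add: Dc_zero)
next
  case (insert j S)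
  then have "vanishes_along A (\<lambda>q. F j q + (\<Sum>j\<in>S. F j q)) x0 r"
    by (intro vanishes_along_add smooth_on_sum[OF U]) auto
  then show ?case using insert by simp
qed

lemma Dc_snoc_mult:
  assumes b: "smooth_on U b" and h: "smooth_on U h"
  shows "Dc (cs @ [c]) (\<lambda>q. b q * h q) x0
       = Dc cs (\<lambda>q. b q * cdiff h q c) x0 + Dc cs (\<lambda>q. cdiff b q c * h q) x0"
proof -
  have "cdiff (\<lambda>q. b q * h q) q c = b q * cdiff h q c + cdiff b q c * h q" if "q \<in> U" for q
    using cdiff_mult smooth_on_imp_differentiable b h that by blast
  from Dc_eq_on_open[OF U this x0, where cs = cs] show ?thesis
    using Dc_add[OF U smooth_on_mult[OF U b smooth_on_cdiff[OF U h]]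
        smooth_on_mult[OF U smooth_on_cdiff[OF U b] h] x0]
    by (simp add: Dc_append)
qed

lemma vanishes_along_mult:
  "smooth_on U b \<Longrightarrow> smooth_on U h \<Longrightarrow> vanishes_along A h x0 r
    \<Longrightarrow> vanishes_along A (\<lambda>q. b q * h q) x0 r"
proof (induction r arbitrary: b h)
  case (Suc r)
  show ?case
  proof (rule vanishes_alongI)
    fix cs assume cs: "set cs \<subseteq> A" "length cs < Suc r"
    show "Dc cs (\<lambda>q. b q * h q) x0 = 0"
    proof (cases cs rule: rev_exhaust)
      case Nil
      then show ?thesis using vanishes_alongD[OF Suc.prems(3), of "[]"] by simp
    next
      case (snoc cs' c)
      then have cs': "set cs' \<subseteq> A" "length cs' < r" "c \<in> A" using cs by auto
      have "vanishes_along A (\<lambda>q. b q * cdiff h q c) x0 r"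
        using Suc.IH[OF Suc.prems(1) smooth_on_cdiff[OF U Suc.prems(2)]
            vanishes_along_cdiff[OF Suc.prems(3) cs'(3)]] .
      moreover have "vanishes_along A (\<lambda>q. cdiff b q c * h q) x0 r"
        using Suc.IH[OF smooth_on_cdiff[OF U Suc.prems(1)] Suc.prems(2)
            vanishes_along_mono[OF Suc.prems(3)]] by simp
      ultimately show ?thesis
        unfolding snoc Dc_snoc_mult[OF Suc.prems(1,2)] using vanishes_alongD[OF _ cs'(1,2)] by simp
    qed
  qed
qed (simp add: vanishes_along_0)

lemma vanishes_along_mult_zero:
  "smooth_on U b \<Longrightarrow> smooth_on U h \<Longrightarrow> b x0 = 0 \<Longrightarrow> vanishes_along A h x0 r
    \<Longrightarrow> vanishes_along A (\<lambda>q. b q * h q) x0 (Suc r)"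
proof (induction r arbitrary: h)
  case 0
  then show ?case unfolding vanishes_along_def by simp
next
  case (Suc r)
  show ?case
  proof (rule vanishes_alongI)
    fix cs assume cs: "set cs \<subseteq> A" "length cs < Suc (Suc r)"
    show "Dc cs (\<lambda>q. b q * h q) x0 = 0"
    proof (cases cs rule: rev_exhaust)
      case Nil
      then show ?thesis using Suc.prems(3) by simp
    next
      case (snoc cs' c)
      then have cs': "set cs' \<subseteq> A" "length cs' < Suc r" "c \<in> A" using cs by auto
      have "vanishes_along A (\<lambda>q. b q * cdiff h q c) x0 (Suc r)"
        using Suc.IH[OF Suc.prems(1) smooth_on_cdiff[OF U Suc.prems(2)] Suc.prems(3)
            vanishes_along_cdiff[OF Suc.prems(4) cs'(3)]] .
      moreover have "vanishes_along A (\<lambda>q. cdiff b q c * h q) x0 (Suc r)"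
        using vanishes_along_mult[OF smooth_on_cdiff[OF U Suc.prems(1)] Suc.prems(2,4)] .
      ultimately show ?thesis
        unfolding snoc Dc_snoc_mult[OF Suc.prems(1,2)] using vanishes_alongD[OF _ cs'(1,2)] by simp
    qed
  qed
qed

end

section \<open>Wirtinger derivatives\<close>

text \<open>The coordinate vector d/dzbar^k = (d/dx^k + i d/dy^k)/2, conjugate to \<^const>\<open>dz_vec\<close>.\<close>
definition dzbar_vec :: "'n::finite \<Rightarrow> (complex^'n) \<times> (complex^'n)" where
  "dzbar_vec k = ((1/2) *\<^sub>R axis k 1, (1/2) *\<^sub>R axis k \<i>)"

definition wirtinger_dirs :: "((complex^'n::finite) \<times> (complex^'n)) set" where
  "wirtinger_dirs = range dz_vec \<union> range dzbar_vec"

lemma frechet_derivative_axis_wirtinger: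
  fixes g :: "complex^'n::finite \<Rightarrow> complex"
  assumes "g differentiable at p"
  shows "frechet_derivative g (at p) (axis j 1) = cdiff g p (dz_vec j) + cdiff g p (dzbar_vec j)"
    and "frechet_derivative g (at p) (axis j \<i>)
       = \<i> * cdiff g p (dz_vec j) - \<i> * cdiff g p (dzbar_vec j)"
proof -
  interpret D: linear "frechet_derivative g (at p)"
    using assms by (rule linear_frechet_derivative)
  show "frechet_derivative g (at p) (axis j 1) = cdiff g p (dz_vec j) + cdiff g p (dzbar_vec j)"
    "frechet_derivative g (at p) (axis j \<i>)
       = \<i> * cdiff g p (dz_vec j) - \<i> * cdiff g p (dzbar_vec j)"
    unfolding cdiff_def dz_vec_def dzbar_vec_def
    by (simp_all add: D.scale D.neg) (simp_all add: scaleR_conv_of_real field_simps)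
qed

lemma linear_complex_vec_expansion:
  fixes L :: "complex^'n::finite \<Rightarrow> 'b::real_vector"
  assumes "linear L"
  shows "L w = (\<Sum>j\<in>UNIV. Re (w $ j) *\<^sub>R L (axis j 1) + Im (w $ j) *\<^sub>R L (axis j \<i>))"
proof -
  have "w = (\<Sum>j\<in>UNIV. Re (w $ j) *\<^sub>R axis j 1 + Im (w $ j) *\<^sub>R axis j \<i>)"
  proof (rule vec_eq_iff[THEN iffD2], rule allI)
    fix i
    have "(\<Sum>j\<in>UNIV. Re (w $ j) *\<^sub>R axis j 1 + Im (w $ j) *\<^sub>R axis j \<i>) $ i
        = (\<Sum>j\<in>UNIV. if i = j then Re (w $ j) *\<^sub>R 1 + Im (w $ j) *\<^sub>R \<i> else 0)"
      unfolding sum_component by (intro sum.cong) (auto simp: axis_def)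
    also have "\<dots> = w $ i" by (simp add: complex_eq_iff)
    finally show "w $ i = (\<Sum>j\<in>UNIV. Re (w $ j) *\<^sub>R axis j 1 + Im (w $ j) *\<^sub>R axis j \<i>) $ i" ..
  qed
  then have "L w = L (\<Sum>j\<in>UNIV. Re (w $ j) *\<^sub>R axis j 1 + Im (w $ j) *\<^sub>R axis j \<i>)"
    by (rule arg_cong)
  also have "\<dots> = (\<Sum>j\<in>UNIV. Re (w $ j) *\<^sub>R L (axis j 1) + Im (w $ j) *\<^sub>R L (axis j \<i>))"
    by (simp add: linear_sum[OF assms] linear_add[OF assms] linear_scale[OF assms])
  finally show ?thesis .
qed

lemma funpow_dz: "(dz k ^^ n) g = Dc (replicate n (dz_vec k)) g"
  by (induction n) (auto simp: dz_def)

lemma dz_multi_eq_Dc: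
  "dz_multi \<alpha> g = Dc (concat (map (\<lambda>k. replicate (\<alpha> k) (dz_vec k)) (sorted_list_of_set UNIV))) g"
proof -
  have "foldr (\<lambda>k h. (dz k ^^ \<alpha> k) h) ks g
      = Dc (concat (map (\<lambda>k. replicate (\<alpha> k) (dz_vec k)) ks)) g" for ks
    by (induction ks) (auto simp: funpow_dz Dc_append)
  then show ?thesis unfolding dz_multi_def .
qed

lemma mset_concat_replicate_count:
  "distinct xs \<Longrightarrow> mset (concat (map (\<lambda>k. replicate (count M k) (F k)) xs))
     = image_mset F (filter_mset (\<lambda>k. k \<in> set xs) M)"
proof (induction xs)
  case (Cons x xs)
  have "filter_mset (\<lambda>k. k \<in> set (x # xs)) M
      = filter_mset (\<lambda>k. k = x) M + filter_mset (\<lambda>k. k \<in> set xs) M"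
    using Cons.prems by (auto simp: multiset_eq_iff)
  then show ?case using Cons by (simp add: filter_eq_replicate_mset)
qed simp

lemma Dc_map_dz_vec_eq_dz_multi:
  assumes "open U" "smooth_on U g" "x0 \<in> U"
  shows "Dc (map dz_vec ks) g x0 = dz_multi (count (mset ks)) g x0"
proof -
  have "mset (concat (map (\<lambda>k. replicate (count (mset ks) k) (dz_vec k)) (sorted_list_of_set UNIV)))
      = mset (map dz_vec ks)"
    using mset_concat_replicate_count[of "sorted_list_of_set UNIV" "mset ks" dz_vec] by simp
  then show ?thesis
    unfolding dz_multi_eq_Dc by (rule Dc_mset_eq[OF assms(1,2) _ assms(3), symmetric])
qed

lemma multi_deg_count_mset: "multi_deg (count (mset ks)) = length ks"
  unfolding multi_deg_def by (simp add: count_mset sum_count_set)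

context
  fixes U :: "(complex^'n::finite) set" and x0
  assumes U: "open U" and x0: "x0 \<in> U"
begin

lemma vanishes_along_real_partials:
  assumes g: "smooth_on U g" and v: "vanishes_along wirtinger_dirs g x0 (Suc r)"
  shows "vanishes_along wirtinger_dirs (\<lambda>p. frechet_derivative g (at p) (axis j 1)) x0 r"
    and "vanishes_along wirtinger_dirs (\<lambda>p. frechet_derivative g (at p) (axis j \<i>)) x0 r"
proof -
  have s: "smooth_on U (\<lambda>p. cdiff g p (dz_vec j))" "smooth_on U (\<lambda>p. cdiff g p (dzbar_vec j))"
    using smooth_on_cdiff[OF U g] by blast+
  have v': "vanishes_along wirtinger_dirs (\<lambda>p. cdiff g p (dz_vec j)) x0 r"
    "vanishes_along wirtinger_dirs (\<lambda>p. cdiff g p (dzbar_vec j)) x0 r"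
    using v by (auto intro: vanishes_along_cdiff simp: wirtinger_dirs_def)
  have "vanishes_along wirtinger_dirs (\<lambda>p. cdiff g p (dz_vec j) + cdiff g p (dzbar_vec j)) x0 r"
    by (rule vanishes_along_add[OF U x0 s v'])
  then show "vanishes_along wirtinger_dirs (\<lambda>p. frechet_derivative g (at p) (axis j 1)) x0 r"
    by (rule vanishes_along_eq_on_open[OF U x0, rotated])
      (simp add: frechet_derivative_axis_wirtinger(1)[OF smooth_on_imp_differentiable[OF g]])
  have "vanishes_along wirtinger_dirs
          (\<lambda>p. \<i> * cdiff g p (dz_vec j) + (- \<i>) * cdiff g p (dzbar_vec j)) x0 r"
    by (rule vanishes_along_add[OF U x0
          smooth_on_mult[OF U smooth_on_const s(1)] smooth_on_mult[OF U smooth_on_const s(2)]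
          vanishes_along_mult[OF U x0 smooth_on_const s(1) v'(1)]
          vanishes_along_mult[OF U x0 smooth_on_const s(2) v'(2)]])
  then show "vanishes_along wirtinger_dirs (\<lambda>p. frechet_derivative g (at p) (axis j \<i>)) x0 r"
    by (rule vanishes_along_eq_on_open[OF U x0, rotated])
      (simp add: frechet_derivative_axis_wirtinger(2)[OF smooth_on_imp_differentiable[OF g]])
qed

lemma vanishes_along_imp_vanishes_to_order:
  "smooth_on U g \<Longrightarrow> vanishes_along wirtinger_dirs g x0 r \<Longrightarrow> vanishes_to_order g x0 r"
proof (induction r arbitrary: g)
  case 0
  then show ?case unfolding vanishes_to_order_def by simp
next
  case (Suc r)
  show ?case unfolding vanishes_to_order_def
  proof (intro allI impI)
    fix vs :: "(complex^'n) list" assume vs: "set vs \<subseteq> real_coord_dirs \<and> length vs < Suc r"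
    show "Dl vs g x0 = 0"
    proof (cases vs rule: rev_exhaust)
      case Nil
      then show ?thesis using vanishes_alongD[OF Suc.prems(2), of "[]"] by simp
    next
      case (snoc ws v)
      obtain j where "v = axis j 1 \<or> v = axis j \<i>"
        using vs snoc unfolding real_coord_dirs_def by auto
      then have "vanishes_to_order (\<lambda>p. frechet_derivative g (at p) v) x0 r"
        using Suc.IH[OF smooth_on_frechet_derivative[OF Suc.prems(1)]]
          vanishes_along_real_partials[OF Suc.prems] by blast
      then show ?thesis using vs unfolding snoc vanishes_to_order_def by (simp add: Dl_append)
    qed
  qed
qed

lemma vanishes_along_frechet_derivative_field:
  fixes g :: "complex^'n \<Rightarrow> complex" and V :: "complex^'n \<Rightarrow> complex^'n"
  assumes g: "smooth_on U g" and V: "smooth_on U V" "V x0 = 0"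
    and gx: "\<And>j. vanishes_along A (\<lambda>p. frechet_derivative g (at p) (axis j 1)) x0 r"
    and gy: "\<And>j. vanishes_along A (\<lambda>p. frechet_derivative g (at p) (axis j \<i>)) x0 r"
  shows "vanishes_along A (\<lambda>p. frechet_derivative g (at p) (V p)) x0 (Suc r)"
proof -
  define re where "re j v = complex_of_real (Re (v $ j))" for j and v :: "complex^'n"
  define im where "im j v = complex_of_real (Im (v $ j))" for j and v :: "complex^'n"
  define T where "T j p = re j (V p) * frechet_derivative g (at p) (axis j 1)
                        + im j (V p) * frechet_derivative g (at p) (axis j \<i>)" for j p
  have "bounded_linear (re j)" "bounded_linear (im j)" for j
    unfolding re_def im_def
    by (intro bounded_linear_compose[OF bounded_linear_of_real]
          bounded_linear_compose[OF bounded_linear_Re] bounded_linear_compose[OF bounded_linear_Im]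
          bounded_linear_vec_nth)+
  then have c: "smooth_on U (\<lambda>p. re j (V p))" "smooth_on U (\<lambda>p. im j (V p))" for j
    using smooth_on_bounded_linear[OF U _ V(1)] by blast+
  have d: "smooth_on U (\<lambda>p. frechet_derivative g (at p) v)" for v
    by (rule smooth_on_frechet_derivative[OF g])
  have sT: "smooth_on U (T j)" for j
    unfolding T_def
    by (rule smooth_on_add[OF U smooth_on_mult[OF U c(1) d] smooth_on_mult[OF U c(2) d]])
  have "re j (V x0) = 0" "im j (V x0) = 0" for j
    using V(2) by (simp_all add: re_def im_def)
  then have vT: "vanishes_along A (T j) x0 (Suc r)" for j
    unfolding T_def
    by (rule vanishes_along_add[OF U x0 smooth_on_mult[OF U c(1) d] smooth_on_mult[OF U c(2) d]
          vanishes_along_mult_zero[OF U x0 c(1) d _ gx]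
          vanishes_along_mult_zero[OF U x0 c(2) d _ gy]])
  have "vanishes_along A (\<lambda>p. \<Sum>j\<in>UNIV. T j p) x0 (Suc r)"
    by (rule vanishes_along_sum[OF U x0]) (simp_all add: sT vT)
  moreover have "(\<Sum>j\<in>UNIV. T j p) = frechet_derivative g (at p) (V p)" if "p \<in> U" for p
    using linear_complex_vec_expansion[OF linear_frechet_derivative[OF
          smooth_on_imp_differentiable[OF g that]], of "V p"]
    unfolding T_def re_def im_def by (simp add: scaleR_conv_of_real)
  ultimately show ?thesis by (rule vanishes_along_eq_on_open[OF U x0, rotated])
qed

lemma vanishes_along_wirtinger_Suc:
  assumes f: "smooth_on U f" and v: "vanishes_along wirtinger_dirs f x0 r"
    and dzbar: "\<And>k. vanishes_along wirtinger_dirs (\<lambda>p. cdiff f p (dzbar_vec k)) x0 r"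
    and dz: "\<And>ks. length ks = r \<Longrightarrow> Dc (map dz_vec ks) f x0 = 0"
  shows "vanishes_along wirtinger_dirs f x0 (Suc r)"
proof (rule vanishes_alongI)
  fix cs :: "((complex^'n) \<times> (complex^'n)) list"
  assume cs: "set cs \<subseteq> wirtinger_dirs" "length cs < Suc r"
  show "Dc cs f x0 = 0"
  proof (cases "length cs < r")
    case True
    then show ?thesis using vanishes_alongD[OF v cs(1)] by blast
  next
    case False
    then have len: "length cs = r" using cs(2) by simp
    show ?thesis
    proof (cases "set cs \<subseteq> range dz_vec")
      case True
      then obtain ks where "cs = map dz_vec ks" using ex_map_conv[of cs dz_vec] by blast
      then show ?thesis using dz len by simp
    next
      case False
      then obtain k where "dzbar_vec k \<in> set cs" using cs(1) unfolding wirtinger_dirs_def by blast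
      then obtain xs ys where cs_eq: "cs = xs @ dzbar_vec k # ys" by (meson split_list)
      have "Dc cs f x0 = Dc ((xs @ ys) @ [dzbar_vec k]) f x0"
        by (rule Dc_mset_eq[OF U f _ x0]) (simp add: cs_eq)
      also have "\<dots> = Dc (xs @ ys) (\<lambda>p. cdiff f p (dzbar_vec k)) x0"
        by (simp add: Dc_append)
      also have "\<dots> = 0"
        by (rule vanishes_alongD[OF dzbar]) (use cs(1) cs_eq len in auto)
      finally show ?thesis .
    qed
  qed
qed

end

section \<open>J-holomorphic functions\<close>

lemma dz_vec_T10_imp_J_axis:
  assumes "linear (J p)" "dz_vec k \<in> T10 J p"
  shows "J p (axis k 1) = axis k \<i>"
proof -
  have "J p ((1/2) *\<^sub>R axis k 1) = (1/2) *\<^sub>R axis k \<i>"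
    using assms(2) unfolding T10_def cJ_def cmult_i_def dz_vec_def by simp
  then show ?thesis using linear_scale[OF assms(1)] by simp
qed

lemma J_holomorphic_on_cauchy_riemann:
  assumes "almost_complex_on U J" "J_holomorphic_on U J f" "p \<in> U"
  shows "frechet_derivative f (at p) u + \<i> * frechet_derivative f (at p) (J p u) = 0"
proof -
  have "(u, J p u) \<in> T01 J p"
    using assms(1,3) unfolding T01_def cJ_def cmult_i_def almost_complex_on_def by simp
  then have "cdiff f p (u, J p u) = 0" using assms(2,3) unfolding J_holomorphic_on_def by blast
  then show ?thesis unfolding cdiff_def by simp
qed

lemma cdiff_dzbar_vec_eq:
  assumes "f differentiable at p"
    and "\<And>u. frechet_derivative f (at p) u + \<i> * frechet_derivative f (at p) (J p u) = 0"
  shows "cdiff f p (dzbar_vec k)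
       = frechet_derivative f (at p) ((1/2) *\<^sub>R (axis k 1 + J p (axis k \<i>)))"
proof -
  interpret D: linear "frechet_derivative f (at p)"
    using assms(1) by (rule linear_frechet_derivative)
  have "\<i> * (frechet_derivative f (at p) (axis k \<i>)
          + \<i> * frechet_derivative f (at p) (J p (axis k \<i>))) = 0"
    using assms(2) by simp
  then have "frechet_derivative f (at p) (J p (axis k \<i>))
      = \<i> * frechet_derivative f (at p) (axis k \<i>)"
    by (simp add: algebra_simps)
  then show ?thesis
    unfolding cdiff_def dzbar_vec_def
    by (simp add: D.add D.scale) (simp add: scaleR_conv_of_real algebra_simps)
qed

lemma vanishes_along_dzbar_vec:
  assumes U: "open U" and x0: "x0 \<in> U"
    and J: "almost_complex_on U J" and T10: "\<forall>k. dz_vec k \<in> T10 J x0"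
    and f: "J_holomorphic_on U J f" and v: "vanishes_along wirtinger_dirs f x0 r"
  shows "vanishes_along wirtinger_dirs (\<lambda>p. cdiff f p (dzbar_vec k)) x0 r"
proof (cases r)
  case 0
  then show ?thesis by (simp add: vanishes_along_0)
next
  case (Suc r')
  have fs: "smooth_on U f" using f unfolding J_holomorphic_on_def by blast
  define V where "V p = (1/2) *\<^sub>R (axis k 1 + J p (axis k \<i>))" for p
  have "smooth_on U (\<lambda>p. J p (axis k \<i>))" using J unfolding almost_complex_on_def by blast
  from smooth_on_bounded_linear[OF U bounded_linear_scaleR_right
      smooth_on_add[OF U smooth_on_const this]]
  have sV: "smooth_on U V" unfolding V_def .
  have Jx0: "linear (J x0)" "\<And>v. J x0 (J x0 v) = - v"
    using J x0 unfolding almost_complex_on_def by auto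
  have "J x0 (axis k 1) = axis k \<i>" using dz_vec_T10_imp_J_axis[of J x0 k, OF Jx0(1)] T10 by blast
  then have "J x0 (axis k \<i>) = - axis k 1" using Jx0(2)[of "axis k 1"] by simp
  then have V0: "V x0 = 0" unfolding V_def by simp
  have "vanishes_along wirtinger_dirs (\<lambda>p. frechet_derivative f (at p) (V p)) x0 r"
    unfolding Suc by (rule vanishes_along_frechet_derivative_field[OF U x0 fs sV V0
          vanishes_along_real_partials[OF U x0 fs v[unfolded Suc]]])
  moreover have "frechet_derivative f (at p) (V p) = cdiff f p (dzbar_vec k)" if "p \<in> U" for p
    unfolding V_def using J_holomorphic_on_cauchy_riemann[OF J f that]
    by (intro cdiff_dzbar_vec_eq[symmetric] smooth_on_imp_differentiable[OF fs that])
  ultimately show ?thesis by (rule vanishes_along_eq_on_open[OF U x0, rotated])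
qed

theorem lemma4p4:
  fixes U :: "((complex, 'n::{finite,linorder}) vec) set"
    and J :: "(complex, 'n) vec \<Rightarrow> (complex, 'n) vec \<Rightarrow> (complex, 'n) vec"
    and f :: "(complex, 'n) vec \<Rightarrow> complex"
    and x0 :: "(complex, 'n) vec" and m :: nat
  assumes "open U" and "x0 \<in> U"
    and "almost_complex_on U J"
    and "\<forall>k. dz_vec k \<in> T10 J x0"
    and "J_holomorphic_on U J f"
    and "\<forall>\<alpha>. multi_deg \<alpha> \<le> m \<longrightarrow> dz_multi \<alpha> f x0 = 0"
  shows "ord_at f x0 \<ge> enat (m + 1)"
proof -
  have f: "smooth_on U f" using assms(5) unfolding J_holomorphic_on_def by blast
  have dz: "Dc (map dz_vec ks) f x0 = 0" if "length ks \<le> m" for ks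
    using assms(6) that multi_deg_count_mset[of ks]
    by (simp add: Dc_map_dz_vec_eq_dz_multi[OF assms(1) f assms(2)])
  have "vanishes_along wirtinger_dirs f x0 r" if "r \<le> Suc m" for r
    using that
  proof (induction r)
    case 0
    show ?case by (rule vanishes_along_0)
  next
    case (Suc r)
    then have "vanishes_along wirtinger_dirs f x0 r" by simp
    with Suc.prems show ?case
      by (intro vanishes_along_wirtinger_Suc[OF assms(1,2) f]
          vanishes_along_dzbar_vec[OF assms(1-5)] dz) auto
  qed
  then have "vanishes_to_order f x0 (m + 1)"
    by (simp add: vanishes_along_imp_vanishes_to_order[OF assms(1,2) f])
  then show ?thesis unfolding ord_at_def by (intro SUP_upper) simp
qed

end
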